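(* For every positive integer $n$: (a) $\displaystyle M(n,2)\le 2\sum_{\omega=0}^{n-1}\sum_{m=0}^{\min\{\omega,n-\omega\}}\binom{\omega-1}{m-1}\binom{n-\omega}{m}\frac{1}{1+m+\binom{\omega}{2}}$; (b) $\displaystyle M(n,3)\le 2\sum_{\omega=0}^{n-1}\sum_{m=0}^{\min\{\omega,n-\omega\}}\sum_{m_1=0}^{m}\binom{m}{m_1}\binom{\omega-m-1}{m-m_1-1}\binom{n-\omega}{m}\frac{1}{\phi_3(m_1,m,\omega)}$, where $\phi_3(m_1,m,\omega)=1+m_1+m(\omega-3)+\binom{\omega}{3}-\binom{\omega}{2}+2\omega$.
   Context: Binomial coefficient conventions: $\binom{a}{-1}$ equals $1$ if $a=-1$ and $0$ otherwise; $\binom{a}{b}=0$ when $a<0$ (other than the case just specified) and when $b>a\ge0$. A grain pattern of length $n$ is a subset $E\subseteq\{2,\dots,n\}$ containing no two consecutive integers. For such $E$, $\phi_E:\{0,1\}^n\to\{0,1\}^n$ sends $\mathbf{x}$ to $\mathbf{y}$ with $y_j=x_{j-1}$ if $j\in E$ and $y_j=x_j$ otherwise. $\Phi_t(\mathbf{x})=\{\phi_E(\mathbf{x}): E \text{ a grain pattern of length } n,\ |E|\le t\}$. A code $\mathcal{C}\subseteq\{0,1\}^n$ is $t$-grain-correcting if for any two distinct codewords $\mathbf{x}_1,\mathbf{x}_2$ one has $\Phi_t(\mathbf{x}_1)\cap\Phi_t(\mathbf{x}_2)=\emptyset$. $M(n,t)$ is the maximum cardinality of a $t$-grain-correcting code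 of length $n$. *)

theory Defs
  imports Complex_Main
begin

text \<open>Binomial coefficient on integers with the paper's conventions:
  binom a (-1) = 1 if a = -1 and 0 otherwise; binom a b = 0 if a < 0 (other cases)
  or b > a >= 0; otherwise the usual binomial coefficient.  (Negative b other than -1
  never occurs in the statement; we set it to 0.)\<close>
definition ibinom :: "int \<Rightarrow> int \<Rightarrow> int" where
  "ibinom a b = (if b = -1 then (if a = -1 then 1 else 0)
                 else if a < 0 \<or> b < 0 then 0
                 else int (nat a choose nat b))"

text \<open>Binary words of length n are bool lists; position j (1-based) is index j-1.\<close>
definition grain_pattern :: "nat \<Rightarrow> nat set \<Rightarrow> bool" where
  "grain_pattern n E \<longleftrightarrow> E \<subseteq> {2..n} \<and> (\<forall>j\<in>E. j + 1 \<notin> E)"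

definition phi_grain :: "nat set \<Rightarrow> bool list \<Rightarrow> bool list" where
  "phi_grain E x = map (\<lambda>i. if Suc i \<in> E then x ! (i - 1) else x ! i) [0..<length x]"

definition Phi_grain :: "nat \<Rightarrow> bool list \<Rightarrow> bool list set" where
  "Phi_grain t x = {phi_grain E x | E. grain_pattern (length x) E \<and> card E \<le> t}"

definition grain_correcting :: "nat \<Rightarrow> nat \<Rightarrow> bool list set \<Rightarrow> bool" where
  "grain_correcting n t C \<longleftrightarrow> C \<subseteq> {x. length x = n} \<and>
     (\<forall>x1\<in>C. \<forall>x2\<in>C. x1 \<noteq> x2 \<longrightarrow> Phi_grain t x1 \<inter> Phi_grain t x2 = {})"

definition M_grain :: "nat \<Rightarrow> nat \<Rightarrow> nat" where
  "M_grain n t = Max {card C | C. grain_correcting n t C}"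

definition phi3 :: "nat \<Rightarrow> nat \<Rightarrow> nat \<Rightarrow> int" where
  "phi3 m1 m w = 1 + int m1 + int m * (int w - 3) + int (w choose 3) - int (w choose 2) + 2 * int w"

end

theory Submission
  imports Defs
begin

text \<open>
  A grain pattern acts on a word \<open>x\<close> only through its intersection with the set \<open>S\<close> of
  positions where \<open>x\<close> changes, and distinct non-consecutive subsets of \<open>S\<close> act differently;
  so \<open>|Phi t x|\<close> is the number of non-consecutive subsets of \<open>S\<close> with at most \<open>t\<close> elements.
  An explicit injection on pairs of error patterns shows that the numbers \<open>|Phi t y|\<close>,
  \<open>y \<in> Phi t x\<close>, add up to at most \<open>|Phi t x|\<^sup>2\<close>, so by convexity their inverses add up to at
  least 1. As the sets \<open>Phi t x\<close> of distinct codewords are disjoint, a code has at most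
  \<open>\<Sum> 1 / |Phi t y|\<close> elements, the sum ranging over all words \<open>y\<close> of length \<open>n\<close>.

  The change positions of \<open>y\<close> form the support of its difference word, of length \<open>n - 1\<close>,
  and each difference word comes from exactly two words. For \<open>t = 2, 3\<close> the number of
  non-consecutive subsets of the support depends only on its size \<open>w\<close>, its number \<open>m\<close> of runs
  and its number \<open>m1\<close> of runs of length one; counting words by these statistics yields the
  binomial coefficients of the bounds.
\<close>

section \<open>Non-consecutive sets\<close>

definition non_consecutive :: "nat set \<Rightarrow> bool" where
  "non_consecutive F \<longleftrightarrow> (\<forall>j\<in>F. Suc j \<notin> F)"

definition nc_subsets :: "nat \<Rightarrow> nat set \<Rightarrow> nat set set" where
  "nc_subsets t S = {E. E \<subseteq> S \<and> non_consecutive E \<and> card E \<le> t}"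

definition nc_ksubsets :: "nat \<Rightarrow> nat set \<Rightarrow> nat set set" where
  "nc_ksubsets k S = {E. E \<subseteq> S \<and> non_consecutive E \<and> card E = k}"

lemma finite_nc_subsets: "finite S \<Longrightarrow> finite (nc_subsets t S)"
  unfolding nc_subsets_def by (rule finite_subset[of _ "Pow S"]) auto

lemma finite_nc_ksubsets: "finite S \<Longrightarrow> finite (nc_ksubsets k S)"
  unfolding nc_ksubsets_def by (rule finite_subset[of _ "Pow S"]) auto

lemma card_nc_subsets_eq_sum:
  assumes "finite S"
  shows "card (nc_subsets t S) = (\<Sum>k\<le>t. card (nc_ksubsets k S))"
proof -
  have "nc_subsets t S = (\<Union>k\<le>t. nc_ksubsets k S)"
    unfolding nc_subsets_def nc_ksubsets_def by auto
  moreover have "\<forall>i\<in>{..t}. \<forall>j\<in>{..t}. i \<noteq> j \<longrightarrow> nc_ksubsets i S \<inter> nc_ksubsets j S = {}"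
    unfolding nc_ksubsets_def by blast
  ultimately show ?thesis
    by (simp add: card_UN_disjoint finite_nc_ksubsets assms)
qed

lemma nc_ksubsets_0: "finite S \<Longrightarrow> nc_ksubsets 0 S = {{}}"
  unfolding nc_ksubsets_def non_consecutive_def by (auto dest: finite_subset)

lemma non_consecutive_image_add: "non_consecutive ((\<lambda>i. i + c) ` F) \<longleftrightarrow> non_consecutive F"
  unfolding non_consecutive_def by auto

lemma card_nc_ksubsets_image_add:
  "card (nc_ksubsets k ((\<lambda>i. i + c) ` S)) = card (nc_ksubsets k S)"
proof -
  let ?f = "\<lambda>i::nat. i + c"
  have inj: "inj ?f" by (simp add: inj_on_def)
  have "nc_ksubsets k (?f ` S) = image ?f ` nc_ksubsets k S"
  proof (intro set_eqI iffI)
    fix F assume "F \<in> nc_ksubsets k (?f ` S)"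
    then obtain G where "G \<subseteq> S" "F = ?f ` G" "non_consecutive F" "card F = k"
      unfolding nc_ksubsets_def subset_image_iff by auto
    then show "F \<in> image ?f ` nc_ksubsets k S"
      unfolding nc_ksubsets_def
      by (auto simp: non_consecutive_image_add card_image inj_on_subset[OF inj])
  next
    fix F assume "F \<in> image ?f ` nc_ksubsets k S"
    then show "F \<in> nc_ksubsets k (?f ` S)"
      unfolding nc_ksubsets_def
      by (auto simp: non_consecutive_image_add card_image inj_on_subset[OF inj])
  qed
  moreover have "inj_on (image ?f) (nc_ksubsets k S)"
    using inj by (simp add: inj_on_def inj_image_eq_iff)
  ultimately show ?thesis by (simp add: card_image)
qed

text \<open>A non-consecutive set containing 0 does not contain 1.\<close>
lemma nc_ksubsets_Suc_insert_0:
  assumes fin: "finite S" and S0: "0 \<notin> S"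
  shows "nc_ksubsets (Suc k) (insert 0 S) = nc_ksubsets (Suc k) S \<union> insert 0 ` nc_ksubsets k (S - {1})"
proof (intro set_eqI iffI)
  fix F assume "F \<in> nc_ksubsets (Suc k) (insert 0 S)"
  then have F: "F \<subseteq> insert 0 S" "non_consecutive F" "card F = Suc k" "finite F"
    unfolding nc_ksubsets_def using fin finite_subset by auto
  show "F \<in> nc_ksubsets (Suc k) S \<union> insert 0 ` nc_ksubsets k (S - {1})"
  proof (cases "0 \<in> F")
    case True
    then have "1 \<notin> F" using F(2) unfolding non_consecutive_def by auto
    then have "F - {0} \<in> nc_ksubsets k (S - {1})"
      using F True unfolding nc_ksubsets_def non_consecutive_def by auto
    moreover have "F = insert 0 (F - {0})" using True by auto
    ultimately show ?thesis by blast
  next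
    case False
    then show ?thesis using F unfolding nc_ksubsets_def by auto
  qed
next
  fix F assume "F \<in> nc_ksubsets (Suc k) S \<union> insert 0 ` nc_ksubsets k (S - {1})"
  then show "F \<in> nc_ksubsets (Suc k) (insert 0 S)"
  proof
    assume "F \<in> insert 0 ` nc_ksubsets k (S - {1})"
    then obtain G where G: "G \<subseteq> S - {1}" "non_consecutive G" "card G = k" "F = insert 0 G"
      unfolding nc_ksubsets_def by auto
    have "finite G" "0 \<notin> G" using G(1) fin S0 finite_subset by auto
    then show ?thesis
      using G unfolding nc_ksubsets_def non_consecutive_def by auto
  qed (auto simp: nc_ksubsets_def)
qed

lemma card_nc_ksubsets_Suc_insert_0:
  assumes fin: "finite S" and S0: "0 \<notin> S"
  shows "card (nc_ksubsets (Suc k) (insert 0 S))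
           = card (nc_ksubsets (Suc k) S) + card (nc_ksubsets k (S - {1}))"
proof -
  have "inj_on (insert 0) (nc_ksubsets k (S - {1}))"
  proof (rule inj_onI)
    fix F G assume "F \<in> nc_ksubsets k (S - {1})" "G \<in> nc_ksubsets k (S - {1})" "insert 0 F = insert 0 G"
    moreover have "0 \<notin> F" "0 \<notin> G" using calculation(1,2) S0 unfolding nc_ksubsets_def by blast+
    ultimately show "F = G" by (metis insert_ident)
  qed
  moreover have "nc_ksubsets (Suc k) S \<inter> insert 0 ` nc_ksubsets k (S - {1}) = {}"
    using S0 unfolding nc_ksubsets_def by blast
  ultimately show ?thesis
    unfolding nc_ksubsets_Suc_insert_0[OF assms]
    by (simp add: card_Un_disjoint card_image finite_nc_ksubsets fin)
qed

section \<open>Grain errors and change positions\<close>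

text \<open>Positions are counted from 1, as in \<open>phi_grain\<close>.\<close>
definition boundary :: "bool list \<Rightarrow> nat set" where
  "boundary x = {j. 2 \<le> j \<and> j \<le> length x \<and> x ! (j - 2) \<noteq> x ! (j - 1)}"

lemma boundary_subset: "boundary x \<subseteq> {2..length x}"
  unfolding boundary_def by auto

lemma finite_boundary: "finite (boundary x)"
  by (rule finite_subset[OF boundary_subset]) simp

lemma length_phi_grain [simp]: "length (phi_grain E x) = length x"
  unfolding phi_grain_def by simp

lemma nth_phi_grain:
  "i < length x \<Longrightarrow> phi_grain E x ! i = (if Suc i \<in> E then x ! (i - 1) else x ! i)"
  unfolding phi_grain_def by simp

lemma phi_grain_empty [simp]: "phi_grain {} x = x"
  by (rule nth_equalityI) (auto simp: nth_phi_grain)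

lemma phi_grain_inter_boundary: "phi_grain (E \<inter> boundary x) x = phi_grain E x"
proof (rule nth_equalityI)
  fix i assume "i < length (phi_grain (E \<inter> boundary x) x)"
  then have i: "i < length x" by simp
  show "phi_grain (E \<inter> boundary x) x ! i = phi_grain E x ! i"
  proof (cases "Suc i \<in> E \<and> Suc i \<notin> boundary x")
    case True
    then have "x ! (i - 1) = x ! i"
      using i unfolding boundary_def by (cases i) auto
    then show ?thesis using i True by (simp add: nth_phi_grain)
  qed (use i in \<open>auto simp: nth_phi_grain\<close>)
qed simp

lemma inj_on_phi_grain: "inj_on (\<lambda>E. phi_grain E x) (Pow (boundary x))"
proof (rule inj_onI)
  have differ: "phi_grain A x \<noteq> phi_grain B x" if "j \<in> A" "j \<notin> B" "A \<subseteq> boundary x" for j A B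
  proof -
    have j: "2 \<le> j" "j \<le> length x" "x ! (j - 2) \<noteq> x ! (j - 1)"
      using that unfolding boundary_def by auto
    have "phi_grain A x ! (j - 1) = x ! (j - 2)"
      using j that(1) by (simp add: nth_phi_grain numeral_2_eq_2)
    moreover have "phi_grain B x ! (j - 1) = x ! (j - 1)"
      using j that(2) by (simp add: nth_phi_grain)
    ultimately show ?thesis using j(3) by metis
  qed
  fix E E' assume "E \<in> Pow (boundary x)" "E' \<in> Pow (boundary x)" "phi_grain E x = phi_grain E' x"
  then show "E = E'" using differ[of _ E E'] differ[of _ E' E] by auto
qed

lemma Phi_grain_eq_image: "Phi_grain t x = (\<lambda>E. phi_grain E x) ` nc_subsets t (boundary x)"
proof
  show "Phi_grain t x \<subseteq> (\<lambda>E. phi_grain E x) ` nc_subsets t (boundary x)"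
  proof
    fix y assume "y \<in> Phi_grain t x"
    then obtain E where E: "y = phi_grain E x" "grain_pattern (length x) E" "card E \<le> t"
      unfolding Phi_grain_def by blast
    have "finite E" using E(2) unfolding grain_pattern_def by (meson finite_atLeastAtMost finite_subset)
    then have "E \<inter> boundary x \<in> nc_subsets t (boundary x)"
      using E(2,3) card_mono[of E "E \<inter> boundary x"]
      unfolding nc_subsets_def non_consecutive_def grain_pattern_def by auto
    then show "y \<in> (\<lambda>E. phi_grain E x) ` nc_subsets t (boundary x)"
      using E(1) phi_grain_inter_boundary by (metis image_eqI)
  qed
  have "grain_pattern (length x) E" if "E \<in> nc_subsets t (boundary x)" for E
    using that boundary_subset[of x]
    unfolding nc_subsets_def grain_pattern_def non_consecutive_def by auto
  then show "(\<lambda>E. phi_grain E x) ` nc_subsets t (boundary x) \<subseteq> Phi_grain t x"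
    unfolding Phi_grain_def nc_subsets_def by blast
qed

lemma card_Phi_grain: "card (Phi_grain t x) = card (nc_subsets t (boundary x))"
  unfolding Phi_grain_eq_image
  by (rule card_image, rule inj_on_subset[OF inj_on_phi_grain]) (auto simp: nc_subsets_def)

lemma finite_Phi_grain: "finite (Phi_grain t x)"
  unfolding Phi_grain_eq_image by (simp add: finite_nc_subsets finite_boundary)

lemma self_in_Phi_grain: "x \<in> Phi_grain t x"
proof -
  have "{} \<in> nc_subsets t (boundary x)"
    unfolding nc_subsets_def non_consecutive_def by simp
  then show ?thesis unfolding Phi_grain_eq_image by force
qed

lemma length_Phi_grain: "y \<in> Phi_grain t x \<Longrightarrow> length y = length x"
  unfolding Phi_grain_eq_image by auto

definition boundary_after :: "nat \<Rightarrow> nat set \<Rightarrow> nat set \<Rightarrow> nat set" where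
  "boundary_after n S E = {k. 2 \<le> k \<and> k \<le> n \<and>
     ((k \<in> S \<and> k \<notin> E \<and> k - 1 \<notin> E) \<or> (k - 1 \<in> E \<and> k \<notin> S))}"

lemma boundary_phi_grain:
  assumes "E \<subseteq> boundary x" "non_consecutive E"
  shows "boundary (phi_grain E x) = boundary_after (length x) (boundary x) E"
proof (intro set_eqI)
  fix k
  let ?S = "boundary x" and ?y = "phi_grain E x"
  show "k \<in> boundary ?y \<longleftrightarrow> k \<in> boundary_after (length x) ?S E"
  proof (cases "2 \<le> k \<and> k \<le> length x")
    case True
    then have k: "2 \<le> k" "k \<le> length x" by auto
    have y1: "?y ! (k - 2) = (if k - 1 \<in> E then x ! (k - 3) else x ! (k - 2))"
      using k by (simp add: nth_phi_grain numeral_2_eq_2 numeral_3_eq_3 Suc_diff_Suc)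
    have y2: "?y ! (k - 1) = (if k \<in> E then x ! (k - 2) else x ! (k - 1))"
      using k by (simp add: nth_phi_grain numeral_2_eq_2 Suc_diff_Suc)
    have yb: "k \<in> boundary ?y \<longleftrightarrow> ?y ! (k - 2) \<noteq> ?y ! (k - 1)"
      using k unfolding boundary_def by simp
    have xb: "k \<in> ?S \<longleftrightarrow> x ! (k - 2) \<noteq> x ! (k - 1)"
      using k unfolding boundary_def by simp
    consider "k \<in> E" | "k \<notin> E" "k - 1 \<in> E" | "k \<notin> E" "k - 1 \<notin> E" by blast
    then show ?thesis
    proof cases
      case 1
      then have "k - 1 \<notin> E"
        using assms(2) k unfolding non_consecutive_def by (metis Suc_diff_1 less_le_trans pos2)
      then show ?thesis using 1 yb y1 y2 unfolding boundary_after_def by auto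
    next
      case 2
      then have "k - 1 \<in> ?S" using assms(1) by blast
      then have "x ! (k - 3) \<noteq> x ! (k - 2)"
        unfolding boundary_def by (auto simp: numeral_3_eq_3 numeral_2_eq_2)
      then show ?thesis using 2 yb y1 y2 xb k unfolding boundary_after_def by auto
    next
      case 3
      then show ?thesis using yb y1 y2 xb k unfolding boundary_after_def by auto
    qed
  qed (auto simp: boundary_def boundary_after_def)
qed

section \<open>Encoding pairs of error patterns\<close>

text \<open>A pair \<open>(E, F)\<close>, \<open>F\<close> an error pattern of \<open>phi_grain E x\<close>, is encoded by two error
  patterns of \<open>x\<close>: every position of \<open>F\<close> right behind an error of \<open>E\<close> is pulled back onto that
  error. Adjacent pulled positions \<open>c - 1, c\<close> only arise with \<open>c \<in> E\<close> (a clash); then \<open>c - 1\<close>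
  is dropped from the pulled set and the error \<open>c\<close> is moved to \<open>c - 1\<close>.
  \<open>unclash\<close> inverts the encoding.\<close>
definition pull :: "nat set \<Rightarrow> nat set \<Rightarrow> nat set" where
  "pull E F = (\<lambda>k. if k - 1 \<in> E then k - 1 else k) ` F"

definition clashes :: "nat set \<Rightarrow> nat set \<Rightarrow> nat set" where
  "clashes E F = {c \<in> E. c \<in> pull E F \<and> c - 1 \<in> pull E F}"

definition clash_moved :: "nat set \<Rightarrow> nat set \<Rightarrow> nat set" where
  "clash_moved E F = (\<lambda>c. if c \<in> clashes E F then c - 1 else c) ` E"

definition pull_reduced :: "nat set \<Rightarrow> nat set \<Rightarrow> nat set" where
  "pull_reduced E F = pull E F - (\<lambda>c. c - 1) ` clashes E F"

definition unclash :: "nat set \<Rightarrow> nat set \<Rightarrow> nat set \<Rightarrow> nat set \<times> nat set" where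
  "unclash S E' G' =
     (let Q = {j \<in> E'. Suc j \<in> S \<and> Suc j \<in> G'}; E = (E' - Q) \<union> Suc ` Q
      in (E, (\<lambda>g. if g \<in> E then Suc g else g) ` (G' \<union> Q)))"

context
  fixes n :: nat and S E F :: "nat set"
  assumes S: "S \<subseteq> {2..n}"
    and E: "E \<subseteq> S" "non_consecutive E"
    and F: "F \<subseteq> boundary_after n S E" "non_consecutive F"
begin

private lemma mem_F: "k \<in> F \<Longrightarrow> 2 \<le> k \<and> k \<le> n \<and> ((k \<in> S \<and> k \<notin> E \<and> k - 1 \<notin> E) \<or> (k - 1 \<in> E \<and> k \<notin> S))"
  using F(1) unfolding boundary_after_def by auto

private lemma E_ge_2: "c \<in> E \<Longrightarrow> 2 \<le> c"
  using E(1) S by auto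

private lemma E_Suc: "c \<in> E \<Longrightarrow> Suc c \<notin> E"
  using E(2) unfolding non_consecutive_def by auto

private lemma F_Suc: "k \<in> F \<Longrightarrow> Suc k \<notin> F"
  using F(2) unfolding non_consecutive_def by auto

lemma mem_pull: "g \<in> pull E F \<longleftrightarrow> (g \<in> F \<and> g - 1 \<notin> E) \<or> (Suc g \<in> F \<and> g \<in> E)"
proof
  assume "g \<in> pull E F"
  then obtain k where k: "k \<in> F" "g = (if k - 1 \<in> E then k - 1 else k)"
    unfolding pull_def by blast
  then have "Suc (k - 1) = k" using mem_F by fastforce
  then show "(g \<in> F \<and> g - 1 \<notin> E) \<or> (Suc g \<in> F \<and> g \<in> E)"
    using k by (cases "k - 1 \<in> E") auto
next
  assume "(g \<in> F \<and> g - 1 \<notin> E) \<or> (Suc g \<in> F \<and> g \<in> E)"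
  then show "g \<in> pull E F"
    unfolding pull_def by (auto intro: image_eqI[where x = g] image_eqI[where x = "Suc g"])
qed

lemma pull_subset: "pull E F \<subseteq> S"
  using mem_pull mem_F E(1) by auto

lemma clashes_subset: "clashes E F \<subseteq> E"
  unfolding clashes_def by auto

lemma non_consecutive_pull_reduced: "non_consecutive (pull_reduced E F)"
  unfolding non_consecutive_def
proof
  fix j assume j: "j \<in> pull_reduced E F"
  have "Suc j \<in> clashes E F" if "j \<in> pull E F" "Suc j \<in> pull E F"
    using that mem_pull[of j] mem_pull[of "Suc j"] F_Suc E_Suc unfolding clashes_def by auto
  then show "Suc j \<notin> pull_reduced E F"
    using j unfolding pull_reduced_def by force
qed

lemma clash_moved_subset: "clash_moved E F \<subseteq> S"
  using E(1) pull_subset unfolding clash_moved_def clashes_def by auto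

lemma non_consecutive_clash_moved: "non_consecutive (clash_moved E F)"
  unfolding non_consecutive_def
proof
  fix j assume "j \<in> clash_moved E F"
  then obtain c where c: "c \<in> E" "j = (if c \<in> clashes E F then c - 1 else c)"
    unfolding clash_moved_def by blast
  show "Suc j \<notin> clash_moved E F"
  proof
    assume "Suc j \<in> clash_moved E F"
    then obtain d where d: "d \<in> E" "Suc j = (if d \<in> clashes E F then d - 1 else d)"
      unfolding clash_moved_def by blast
    have "2 \<le> c" "2 \<le> d" using E_ge_2 c d by auto
    show False
    proof (cases "c \<in> clashes E F"; cases "d \<in> clashes E F")
      assume "c \<notin> clashes E F" "d \<in> clashes E F"
      then have "d = Suc (Suc c)" "d - 1 \<in> pull E F" using c d \<open>2 \<le> d\<close> unfolding clashes_def by auto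
      then show False using mem_pull[of "Suc c"] c(1) E_Suc by auto
    next
      assume "c \<in> clashes E F" "d \<in> clashes E F"
      then have "d = Suc c" using c d \<open>2 \<le> c\<close> \<open>2 \<le> d\<close> by simp
      then show False using c(1) d(1) E_Suc by blast
    qed (use c d \<open>2 \<le> c\<close> \<open>2 \<le> d\<close> E_Suc in \<open>auto simp: clashes_def\<close>)
  qed
qed

private lemma clashes_pred:
  assumes "c \<in> clashes E F" shows "Suc (c - 1) = c" "c - 1 \<notin> E" "c - 1 \<notin> clashes E F"
proof -
  have "c \<in> E" using assms unfolding clashes_def by blast
  then show "Suc (c - 1) = c" using E_ge_2 by fastforce
  then show "c - 1 \<notin> E" "c - 1 \<notin> clashes E F"
    using \<open>c \<in> E\<close> E_Suc clashes_subset by (metis, metis subsetD)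
qed

lemma unclash_positions:
  "{j \<in> clash_moved E F. Suc j \<in> S \<and> Suc j \<in> pull_reduced E F} = (\<lambda>c. c - 1) ` clashes E F"
proof (intro set_eqI iffI)
  fix j assume "j \<in> {j \<in> clash_moved E F. Suc j \<in> S \<and> Suc j \<in> pull_reduced E F}"
  then have j: "j \<in> clash_moved E F" "Suc j \<in> pull E F" by (auto simp: pull_reduced_def)
  then obtain c where c: "c \<in> E" "j = (if c \<in> clashes E F then c - 1 else c)"
    unfolding clash_moved_def by blast
  have "c \<in> clashes E F"
  proof (rule ccontr)
    assume "c \<notin> clashes E F"
    then have "Suc c \<in> pull E F" using c(2) j(2) by simp
    then show False using c(1) mem_pull[of "Suc c"] E_Suc by auto
  qed
  then show "j \<in> (\<lambda>c. c - 1) ` clashes E F" using c by simp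
next
  fix j assume "j \<in> (\<lambda>c. c - 1) ` clashes E F"
  then obtain c where c: "c \<in> clashes E F" "j = c - 1" by blast
  have "Suc j = c" using clashes_pred(1)[OF c(1)] c(2) by simp
  moreover have "j \<in> clash_moved E F"
    using c clashes_subset unfolding clash_moved_def by force
  moreover have "c \<notin> (\<lambda>c. c - 1) ` clashes E F"
  proof
    assume "c \<in> (\<lambda>c. c - 1) ` clashes E F"
    then obtain d where "d \<in> clashes E F" "c = d - 1" by blast
    then show False using clashes_pred(2) c(1) clashes_subset by blast
  qed
  moreover have "c \<in> S" "c \<in> pull E F" using c(1) E(1) unfolding clashes_def by auto
  ultimately show "j \<in> {j \<in> clash_moved E F. Suc j \<in> S \<and> Suc j \<in> pull_reduced E F}"
    unfolding pull_reduced_def by simp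
qed

lemma unclash_errors:
  "(clash_moved E F - (\<lambda>c. c - 1) ` clashes E F) \<union> Suc ` (\<lambda>c. c - 1) ` clashes E F = E"
proof -
  have "Suc ` (\<lambda>c. c - 1) ` clashes E F = clashes E F"
    using clashes_pred(1) by (force simp: image_image)
  moreover have "clash_moved E F - (\<lambda>c. c - 1) ` clashes E F = E - clashes E F"
  proof (intro set_eqI iffI)
    fix x assume x: "x \<in> clash_moved E F - (\<lambda>c. c - 1) ` clashes E F"
    then obtain c where c: "c \<in> E" "x = (if c \<in> clashes E F then c - 1 else c)"
      unfolding clash_moved_def by blast
    then show "x \<in> E - clashes E F" using x by (cases "c \<in> clashes E F") auto
  next
    fix x assume x: "x \<in> E - clashes E F"
    have "x \<notin> (\<lambda>c. c - 1) ` clashes E F"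
    proof
      assume "x \<in> (\<lambda>c. c - 1) ` clashes E F"
      then obtain d where "d \<in> clashes E F" "x = d - 1" by blast
      then show False using clashes_pred(2) x by blast
    qed
    then show "x \<in> clash_moved E F - (\<lambda>c. c - 1) ` clashes E F"
      using x unfolding clash_moved_def by force
  qed
  ultimately show ?thesis using clashes_subset by blast
qed

lemma push_pull: "(\<lambda>g. if g \<in> E then Suc g else g) ` pull E F = F"
proof (intro set_eqI iffI)
  fix x assume "x \<in> (\<lambda>g. if g \<in> E then Suc g else g) ` pull E F"
  then show "x \<in> F" using mem_pull mem_F E(1) by auto
next
  fix x assume x: "x \<in> F"
  show "x \<in> (\<lambda>g. if g \<in> E then Suc g else g) ` pull E F"
  proof (cases "x - 1 \<in> E")
    case True
    then have "Suc (x - 1) = x" using E_ge_2 by fastforce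
    then have "x - 1 \<in> pull E F" using True x mem_pull by metis
    then show ?thesis using True \<open>Suc (x - 1) = x\<close> by (metis (mono_tags, lifting) image_eqI)
  next
    case False
    then have "x \<in> pull E F" "x \<notin> E" using mem_pull x mem_F by auto
    then show ?thesis by force
  qed
qed

lemma unclash_encode: "unclash S (clash_moved E F) (pull_reduced E F) = (E, F)"
proof -
  have restore: "pull_reduced E F \<union> (\<lambda>c. c - 1) ` clashes E F = pull E F"
    unfolding pull_reduced_def clashes_def by auto
  show ?thesis
    unfolding unclash_def Let_def unclash_positions unclash_errors restore push_pull ..
qed

lemma card_clash_moved_le: "card (clash_moved E F) \<le> card E"
  unfolding clash_moved_def
  by (rule card_image_le, rule finite_subset[OF E(1) finite_subset[OF S]]) simp

lemma card_pull_reduced_le: "card (pull_reduced E F) \<le> card F"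
proof -
  have "finite F" by (rule finite_subset[OF F(1)]) (simp add: boundary_after_def)
  then have "card (pull_reduced E F) \<le> card (pull E F)"
    unfolding pull_reduced_def pull_def by (intro card_mono) auto
  also have "\<dots> \<le> card F"
    unfolding pull_def using \<open>finite F\<close> by (rule card_image_le)
  finally show ?thesis .
qed

end

lemma card_nc_subsets_pairs_le:
  assumes S: "S \<subseteq> {2..n}"
  shows "card (Sigma (nc_subsets t S) (\<lambda>E. nc_subsets t (boundary_after n S E)))
           \<le> card (nc_subsets t S) ^ 2"
proof -
  let ?D = "Sigma (nc_subsets t S) (\<lambda>E. nc_subsets t (boundary_after n S E))"
  let ?enc = "\<lambda>(E, F). (clash_moved E F, pull_reduced E F)"
  have fin: "finite S" by (rule finite_subset[OF S]) simp
  have inj: "inj_on ?enc ?D"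
    by (rule inj_on_inverseI[where g = "\<lambda>(E', G'). unclash S E' G'"])
       (auto simp: nc_subsets_def intro: unclash_encode[OF S])
  have into: "?enc ` ?D \<subseteq> nc_subsets t S \<times> nc_subsets t S"
  proof
    fix q assume "q \<in> ?enc ` ?D"
    then obtain E F where q: "q = (clash_moved E F, pull_reduced E F)"
      and "E \<in> nc_subsets t S" "F \<in> nc_subsets t (boundary_after n S E)" by auto
    then have E: "E \<subseteq> S" "non_consecutive E" "card E \<le> t"
      and F: "F \<subseteq> boundary_after n S E" "non_consecutive F" "card F \<le> t"
      unfolding nc_subsets_def by auto
    note facts = clash_moved_subset non_consecutive_clash_moved card_clash_moved_le
      pull_subset non_consecutive_pull_reduced card_pull_reduced_le
    show "q \<in> nc_subsets t S \<times> nc_subsets t S"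
      using facts[OF S E(1,2) F(1,2)] E(3) F(3)
      unfolding q nc_subsets_def pull_reduced_def by auto
  qed
  have "card ?D = card (?enc ` ?D)" using card_image[OF inj] by simp
  also have "\<dots> \<le> card (nc_subsets t S \<times> nc_subsets t S)"
    by (rule card_mono[OF _ into]) (simp add: finite_nc_subsets fin)
  finally show ?thesis by (simp add: card_cartesian_product power2_eq_square)
qed

section \<open>A sphere-packing type bound\<close>

lemma finite_words: "finite {b :: bool list. length b = L \<and> P b}"
  by (rule finite_subset[OF _ finite_lists_length_eq[of "UNIV :: bool set" L]]) auto

lemma finite_words_length: "finite {b :: bool list. length b = L}"
  using finite_words[of L "\<lambda>_. True"] by simp

lemma sum_card_Phi_grain_le:
  "(\<Sum>y\<in>Phi_grain t x. card (Phi_grain t y)) \<le> card (Phi_grain t x) ^ 2"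
proof -
  let ?S = "boundary x" and ?n = "length x"
  have inj: "inj_on (\<lambda>E. phi_grain E x) (nc_subsets t ?S)"
    by (rule inj_on_subset[OF inj_on_phi_grain]) (auto simp: nc_subsets_def)
  have "(\<Sum>y\<in>Phi_grain t x. card (Phi_grain t y))
      = (\<Sum>E\<in>nc_subsets t ?S. card (nc_subsets t (boundary (phi_grain E x))))"
    unfolding Phi_grain_eq_image[of t x] sum.reindex[OF inj] by (simp add: card_Phi_grain)
  also have "\<dots> = (\<Sum>E\<in>nc_subsets t ?S. card (nc_subsets t (boundary_after ?n ?S E)))"
    by (rule sum.cong) (auto simp: nc_subsets_def boundary_phi_grain)
  also have "\<dots> = card (Sigma (nc_subsets t ?S) (\<lambda>E. nc_subsets t (boundary_after ?n ?S E)))"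
    by (rule card_SigmaI[symmetric])
       (auto simp: finite_nc_subsets finite_boundary boundary_after_def)
  also have "\<dots> \<le> card (nc_subsets t ?S) ^ 2"
    by (rule card_nc_subsets_pairs_le[OF boundary_subset])
  finally show ?thesis by (simp add: card_Phi_grain)
qed

text \<open>Each \<open>1 / a y\<close> lies above the tangent of \<open>1/a\<close> at \<open>a = card A\<close>.\<close>
lemma one_le_sum_inverse:
  fixes a :: "'a \<Rightarrow> real"
  assumes "finite A" "A \<noteq> {}" and pos: "\<And>y. y \<in> A \<Longrightarrow> 0 < a y"
    and sum_le: "(\<Sum>y\<in>A. a y) \<le> real (card A) ^ 2"
  shows "1 \<le> (\<Sum>y\<in>A. 1 / a y)"
proof -
  define N where "N = real (card A)"
  have N: "0 < N" using assms(1,2) unfolding N_def by (simp add: card_gt_0_iff)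
  have tangent: "2 / N - a y / N^2 \<le> 1 / a y" if "y \<in> A" for y
  proof -
    have "0 \<le> (a y - N)^2 / (a y * N^2)" using pos[OF that] N by simp
    also have "\<dots> = 1 / a y - 2 / N + a y / N^2"
      using pos[OF that] N by (simp add: field_simps power2_eq_square)
    finally show ?thesis by simp
  qed
  have "1 \<le> 2 - (\<Sum>y\<in>A. a y) / N^2"
    using sum_le N unfolding N_def by (simp add: field_simps)
  also have "\<dots> = (\<Sum>y\<in>A. 2 / N - a y / N^2)"
    using N by (simp add: sum_subtractf sum_divide_distrib[symmetric] N_def)
  also have "\<dots> \<le> (\<Sum>y\<in>A. 1 / a y)"
    by (rule sum_mono) (rule tangent)
  finally show ?thesis .
qed

lemma one_le_sum_inverse_card_Phi_grain:
  "1 \<le> (\<Sum>y\<in>Phi_grain t x. 1 / real (card (Phi_grain t y)))"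
proof (rule one_le_sum_inverse)
  show "finite (Phi_grain t x)" "Phi_grain t x \<noteq> {}"
    using finite_Phi_grain[of t x] self_in_Phi_grain[of x t] by auto
  show "0 < real (card (Phi_grain t y))" for y
    using finite_Phi_grain[of t y] self_in_Phi_grain[of y t] card_gt_0_iff by fastforce
  show "(\<Sum>y\<in>Phi_grain t x. real (card (Phi_grain t y))) \<le> real (card (Phi_grain t x)) ^ 2"
    using sum_card_Phi_grain_le by (metis of_nat_le_iff of_nat_power of_nat_sum)
qed

lemma card_le_sum_inverse_card_Phi_grain:
  assumes "grain_correcting n t C"
  shows "real (card C) \<le> (\<Sum>y | length y = n. 1 / real (card (Phi_grain t y)))"
proof -
  let ?W = "{y :: bool list. length y = n}" and ?f = "\<lambda>y. 1 / real (card (Phi_grain t y))"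
  have C: "C \<subseteq> ?W" and disj: "pairwise (\<lambda>x1 x2. Phi_grain t x1 \<inter> Phi_grain t x2 = {}) C"
    using assms unfolding grain_correcting_def pairwise_def by auto
  have W: "finite ?W" by (rule finite_words_length)
  have "finite C" using C W by (rule finite_subset)
  have "real (card C) \<le> (\<Sum>x\<in>C. \<Sum>y\<in>Phi_grain t x. ?f y)"
    using sum_mono[OF one_le_sum_inverse_card_Phi_grain, of C] by simp
  also have "\<dots> = (\<Sum>y\<in>(\<Union>x\<in>C. Phi_grain t x). ?f y)"
    using \<open>finite C\<close> disj by (intro sum.UNION_disjoint[symmetric]) (auto simp: finite_Phi_grain pairwise_def)
  also have "\<dots> \<le> (\<Sum>y\<in>?W. ?f y)"
    using C length_Phi_grain by (intro sum_mono2[OF W]) auto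
  finally show ?thesis .
qed

lemma M_grain_le_sum_inverse_card_Phi_grain:
  "real (M_grain n t) \<le> (\<Sum>y | length y = n. 1 / real (card (Phi_grain t y)))"
proof -
  let ?W = "{y :: bool list. length y = n}"
  have W: "finite ?W" by (rule finite_words_length)
  let ?A = "{card C | C. grain_correcting n t C}"
  have "?A \<subseteq> {..card ?W}"
    unfolding grain_correcting_def using card_mono[OF W] by auto
  then have "finite ?A" by (rule finite_subset) simp
  moreover have "grain_correcting n t {}" unfolding grain_correcting_def by simp
  ultimately have "M_grain n t \<in> ?A" unfolding M_grain_def by (intro Max_in) auto
  then show ?thesis using card_le_sum_inverse_card_Phi_grain by auto
qed

section \<open>Difference words\<close>

definition diff_word :: "bool list \<Rightarrow> bool list" where
  "diff_word y = map (\<lambda>i. y ! i \<noteq> y ! Suc i) [0..<length y - 1]"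

fun integrate :: "bool \<Rightarrow> bool list \<Rightarrow> bool list" where
  "integrate c [] = [c]"
| "integrate c (d # b) = c # integrate (c \<noteq> d) b"

lemma length_diff_word [simp]: "length (diff_word y) = length y - 1"
  unfolding diff_word_def by simp

lemma diff_word_Cons: "y \<noteq> [] \<Longrightarrow> diff_word (a # y) = (a \<noteq> hd y) # diff_word y"
  unfolding diff_word_def by (rule nth_equalityI) (auto simp: nth_Cons' hd_conv_nth)

lemma length_integrate [simp]: "length (integrate c b) = Suc (length b)"
  by (induction b arbitrary: c) auto

lemma hd_integrate [simp]: "hd (integrate c b) = c"
  by (cases b) auto

lemma diff_word_integrate [simp]: "diff_word (integrate c b) = b"
proof (induction b arbitrary: c)
  case (Cons d b)
  have "integrate (c \<noteq> d) b \<noteq> []" by (cases b) auto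
  then show ?case using Cons by (auto simp: diff_word_Cons)
qed (simp add: diff_word_def)

lemma integrate_diff_word: "y \<noteq> [] \<Longrightarrow> integrate (hd y) (diff_word y) = y"
proof (induction y)
  case (Cons a y)
  show ?case
  proof (cases y)
    case (Cons a' y')
    have "(a = (a = a')) = a'" by auto
    then show ?thesis using Cons Cons.IH by (simp add: diff_word_Cons)
  qed (simp add: diff_word_def)
qed simp

lemma sum_words_diff_word:
  fixes h :: "bool list \<Rightarrow> real"
  shows "(\<Sum>y | length y = Suc L. h (diff_word y)) = 2 * (\<Sum>b | length b = L. h b)"
proof -
  let ?P = "(UNIV :: bool set) \<times> {b. length b = L}"
  have words: "{y. length y = Suc L} = (\<lambda>(c, b). integrate c b) ` ?P"
  proof (intro set_eqI iffI)
    fix y :: "bool list" assume y: "y \<in> {y. length y = Suc L}"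
    then have "y \<noteq> []" by auto
    then show "y \<in> (\<lambda>(c, b). integrate c b) ` ?P"
      using y integrate_diff_word[of y] by (intro image_eqI[where x = "(hd y, diff_word y)"]) auto
  qed auto
  have "inj_on (\<lambda>(c, b). integrate c b) ?P"
    by (rule inj_on_inverseI[where g = "\<lambda>y. (hd y, diff_word y)"]) auto
  then have "(\<Sum>y | length y = Suc L. h (diff_word y)) = (\<Sum>(c, b)\<in>?P. h b)"
    unfolding words by (simp add: sum.reindex split_def)
  also have "\<dots> = 2 * (\<Sum>b | length b = L. h b)"
    by (simp add: sum.cartesian_product[symmetric] UNIV_bool)
  finally show ?thesis .
qed

definition ones :: "bool list \<Rightarrow> nat set" where
  "ones b = {i. i < length b \<and> b ! i}"

lemma finite_ones [simp]: "finite (ones b)"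
  unfolding ones_def by simp

lemma ones_Nil [simp]: "ones [] = {}"
  unfolding ones_def by simp

lemma ones_Cons: "ones (c # b) = (if c then insert 0 (Suc ` ones b) else Suc ` ones b)"
proof (intro set_eqI)
  fix i
  show "i \<in> ones (c # b) \<longleftrightarrow> i \<in> (if c then insert 0 (Suc ` ones b) else Suc ` ones b)"
    unfolding ones_def by (cases i) auto
qed

lemma boundary_eq_ones_diff_word: "boundary y = (\<lambda>i. i + 2) ` ones (diff_word y)"
proof (intro set_eqI iffI)
  fix j assume "j \<in> boundary y"
  then have "j - 2 \<in> ones (diff_word y)" "j = j - 2 + 2"
    unfolding boundary_def ones_def diff_word_def by (auto simp: Suc_diff_Suc numeral_2_eq_2)
  then show "j \<in> (\<lambda>i. i + 2) ` ones (diff_word y)" by (metis image_eqI)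
qed (auto simp: boundary_def ones_def diff_word_def)

definition nc_count :: "nat \<Rightarrow> bool list \<Rightarrow> nat" where
  "nc_count k b = card (nc_ksubsets k (ones b))"

lemma card_Phi_grain_eq_sum_nc_count:
  "card (Phi_grain t y) = (\<Sum>k\<le>t. nc_count k (diff_word y))"
proof -
  have "card (Phi_grain t y) = (\<Sum>k\<le>t. card (nc_ksubsets k (boundary y)))"
    unfolding card_Phi_grain by (rule card_nc_subsets_eq_sum[OF finite_boundary])
  then show ?thesis
    unfolding boundary_eq_ones_diff_word card_nc_ksubsets_image_add nc_count_def .
qed

lemma card_nc_ksubsets_image_Suc: "card (nc_ksubsets k (Suc ` S)) = card (nc_ksubsets k S)"
  using card_nc_ksubsets_image_add[of k 1 S] by simp

lemma nc_count_0 [simp]: "nc_count 0 b = 1"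
  unfolding nc_count_def by (simp add: nc_ksubsets_0)

lemma nc_count_Suc_Nil [simp]: "nc_count (Suc k) [] = 0"
  unfolding nc_count_def nc_ksubsets_def by simp

lemma nc_count_Cons_False [simp]: "nc_count k (False # b) = nc_count k b"
  unfolding nc_count_def ones_Cons by (simp add: card_nc_ksubsets_image_Suc)

lemma nc_count_Cons_True: "nc_count (Suc k) (True # b) = nc_count (Suc k) b + nc_count k (tl b)"
proof -
  have "ones b - {0} = Suc ` ones (tl b)"
    by (cases b) (auto simp: ones_Cons)
  then have "Suc ` ones b - {1} = Suc ` Suc ` ones (tl b)" by auto
  then show ?thesis
    unfolding nc_count_def ones_Cons
    by (simp add: card_nc_ksubsets_Suc_insert_0 card_nc_ksubsets_image_Suc)
qed

section \<open>Run statistics\<close>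

abbreviation weight :: "bool list \<Rightarrow> nat" where
  "weight b \<equiv> count_list b True"

text \<open>How a word begins: with a zero (or empty), with a one followed by a zero (or alone),
  or with two ones. This decides how prepending a one changes the run statistics.\<close>
datatype lead = Lead_0 | Lead_10 | Lead_11

fun lead_of :: "bool list \<Rightarrow> lead" where
  "lead_of (True # True # _) = Lead_11"
| "lead_of (True # _) = Lead_10"
| "lead_of _ = Lead_0"

lemma lead_of_Cons_True [simp]:
  "lead_of (True # b) = (if lead_of b = Lead_0 then Lead_10 else Lead_11)"
  by (cases b rule: lead_of.cases) auto

fun runs :: "bool list \<Rightarrow> nat" where
  "runs [] = 0"
| "runs (c # b) = (if c \<and> lead_of b = Lead_0 then Suc (runs b) else runs b)"

text \<open>In the case \<open>Lead_10\<close> the word starts with a singleton run, which the new one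
  lengthens; so the subtraction never truncates.\<close>
fun singleton_runs :: "bool list \<Rightarrow> nat" where
  "singleton_runs [] = 0"
| "singleton_runs (c # b) =
     (if \<not> c then singleton_runs b
      else case lead_of b of
        Lead_0 \<Rightarrow> Suc (singleton_runs b)
      | Lead_10 \<Rightarrow> singleton_runs b - 1
      | Lead_11 \<Rightarrow> singleton_runs b)"

lemma runs_le_weight: "runs b \<le> weight b"
  by (induction b) auto

lemma singleton_runs_le_runs: "singleton_runs b \<le> runs b"
  by (induction b) (auto split: lead.split)

lemma runs_le_Suc_length_minus_weight: "runs b \<le> Suc (length b) - weight b"
proof -
  have "runs b + weight b \<le> length b + (if lead_of b = Lead_0 then 0 else 1)"
  proof (induction b)
    case (Cons c b)
    then show ?case by (cases c; cases "lead_of b") auto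
  qed simp
  then show ?thesis by (cases "lead_of b") auto
qed

lemma choose_2_Suc: "Suc w choose 2 = (w choose 2) + w"
  by (simp add: numeral_2_eq_2)

lemma choose_3_Suc: "Suc w choose 3 = (w choose 3) + (w choose 2)"
  by (simp add: numeral_3_eq_3 numeral_2_eq_2)

lemma int_choose_2_times_2: "int (w choose 2) * 2 = int w * (int w - 1)"
  by (induction w) (simp_all add: choose_2_Suc algebra_simps)

lemma nc_count_1 [simp]: "nc_count (Suc 0) b = weight b"
proof (induction b)
  case (Cons c b)
  then show ?case using nc_count_Cons_True[of 0 b] by (cases c) auto
qed simp

lemma nc_count_2:
  "int (nc_count 2 b) = int (weight b choose 2) - int (weight b) + int (runs b)"
proof (induction b)
  case (Cons c b)
  have step: "nc_count 2 (True # b) = nc_count 2 b + weight (tl b)"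
    using nc_count_Cons_True[of 1 b] by (simp add: numeral_2_eq_2)
  show ?case
  proof (cases c)
    case True
    then show ?thesis using step Cons.IH by (cases b) (auto simp: choose_2_Suc)
  qed (use Cons.IH in simp)
qed (simp add: numeral_2_eq_2)

lemma nc_count_3:
  "int (nc_count 3 b) = int (weight b choose 3) - (int (weight b) - 2) * (int (weight b) - int (runs b))
     + int (weight b) - 2 * int (runs b) + int (singleton_runs b)"
proof (induction b)
  case (Cons c b)
  have step: "nc_count 3 (True # b) = nc_count 3 b + nc_count 2 (tl b)"
    using nc_count_Cons_True[of 2 b] by (simp add: numeral_3_eq_3 numeral_2_eq_2)
  show ?case
  proof (cases c)
    case True
    show ?thesis
    proof (cases b)
      case (Cons c' b')
      then show ?thesis
        using True step Cons.IH nc_count_2[of b']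
        by (cases c'; cases "lead_of b'") (auto simp: choose_2_Suc choose_3_Suc algebra_simps)
    qed (use True step in \<open>simp add: numeral_3_eq_3 numeral_2_eq_2\<close>)
  qed (use Cons.IH in simp)
qed (simp add: numeral_3_eq_3)

lemma sum_nc_count_2: "(\<Sum>k\<le>2. nc_count k b) = 1 + runs b + (weight b choose 2)"
proof -
  have "int (\<Sum>k\<le>2. nc_count k b) = 1 + int (weight b) + int (nc_count 2 b)"
    by (simp add: numeral_2_eq_2)
  then show ?thesis unfolding nc_count_2 by linarith
qed

lemma sum_nc_count_3: "int (\<Sum>k\<le>3. nc_count k b) = phi3 (singleton_runs b) (runs b) (weight b)"
proof -
  have "int (\<Sum>k\<le>3. nc_count k b) = 1 + int (weight b) + int (nc_count 2 b) + int (nc_count 3 b)"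
    by (simp add: numeral_3_eq_3 numeral_2_eq_2)
  then show ?thesis
    using int_choose_2_times_2[of "weight b"] unfolding nc_count_2 nc_count_3 phi3_def by (simp add: algebra_simps)
qed

section \<open>Counting words by run statistics\<close>

definition profile :: "bool list \<Rightarrow> lead \<times> nat \<times> nat \<times> nat" where
  "profile b = (lead_of b, weight b, runs b, singleton_runs b)"

definition profile_count :: "nat \<Rightarrow> lead \<Rightarrow> nat \<Rightarrow> nat \<Rightarrow> nat \<Rightarrow> nat" where
  "profile_count L s w m m1 = card {b. length b = L \<and> profile b = (s, w, m, m1)}"

lemma card_words_Suc:
  "card {b. length b = Suc L \<and> P b}
     = card {b. length b = L \<and> P (True # b)} + card {b. length b = L \<and> P (False # b)}"
proof -
  have "{b. length b = Suc L \<and> P b}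
      = Cons True ` {b. length b = L \<and> P (True # b)} \<union> Cons False ` {b. length b = L \<and> P (False # b)}"
  proof (intro set_eqI iffI)
    fix b assume "b \<in> {b. length b = Suc L \<and> P b}"
    then show "b \<in> Cons True ` {b. length b = L \<and> P (True # b)} \<union> Cons False ` {b. length b = L \<and> P (False # b)}"
      by (cases b; cases "hd b") auto
  qed auto
  then show ?thesis by (simp, subst card_Un_disjoint) (auto simp: finite_words card_image)
qed

lemma card_words_by_lead:
  "card {b. length b = L \<and> P b}
     = card {b. length b = L \<and> lead_of b = Lead_0 \<and> P b}
     + card {b. length b = L \<and> lead_of b = Lead_10 \<and> P b}
     + card {b. length b = L \<and> lead_of b = Lead_11 \<and> P b}"
proof -
  have "{b. length b = L \<and> P b}
      = {b. length b = L \<and> lead_of b = Lead_0 \<and> P b} \<union> {b. length b = L \<and> lead_of b = Lead_10 \<and> P b}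
        \<union> {b. length b = L \<and> lead_of b = Lead_11 \<and> P b}"
    by (auto intro: lead.exhaust)
  then show ?thesis by (simp add: card_Un_disjoint finite_words Int_def conj_commute)
qed

lemma profile_Cons_False: "profile (False # b) = (Lead_0, weight b, runs b, singleton_runs b)"
  unfolding profile_def by simp

lemma profile_Cons_True:
  "profile (True # b) = (case lead_of b of
      Lead_0 \<Rightarrow> (Lead_10, Suc (weight b), Suc (runs b), Suc (singleton_runs b))
    | Lead_10 \<Rightarrow> (Lead_11, Suc (weight b), runs b, singleton_runs b - 1)
    | Lead_11 \<Rightarrow> (Lead_11, Suc (weight b), runs b, singleton_runs b))"
  unfolding profile_def by (cases "lead_of b") auto

lemma profile_count_0:
  "profile_count 0 s w m m1 = (if s = Lead_0 \<and> w = 0 \<and> m = 0 \<and> m1 = 0 then 1 else 0)"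
proof -
  have "{b :: bool list. length b = 0 \<and> profile b = (s, w, m, m1)}
      = (if s = Lead_0 \<and> w = 0 \<and> m = 0 \<and> m1 = 0 then {[]} else {})"
    by (auto simp: profile_def)
  then show ?thesis unfolding profile_count_def by simp
qed

lemma card_words_with_stats_eq_profile_count:
  "card {b. length b = L \<and> weight b = w \<and> runs b = m \<and> singleton_runs b = m1}
     = profile_count (Suc L) Lead_0 w m m1"
proof -
  have "profile (True # b) \<noteq> (Lead_0, w, m, m1)" for b
    by (simp add: profile_Cons_True split: lead.split)
  then show ?thesis
    unfolding profile_count_def card_words_Suc by (simp add: profile_Cons_False)
qed

lemma card_words_with_stats_eq_sum_leads:
  "card {b. length b = L \<and> weight b = w \<and> runs b = m \<and> singleton_runs b = m1}
     = profile_count L Lead_0 w m m1 + profile_count L Lead_10 w m m1 + profile_count L Lead_11 w m m1"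
  unfolding profile_count_def profile_def by (subst card_words_by_lead) (simp add: conj_commute)

lemma profile_count_Suc_Lead_0:
  "profile_count (Suc L) Lead_0 w m m1
     = profile_count L Lead_0 w m m1 + profile_count L Lead_10 w m m1 + profile_count L Lead_11 w m m1"
  unfolding card_words_with_stats_eq_profile_count[symmetric] card_words_with_stats_eq_sum_leads ..

lemma profile_count_Suc_Lead_10:
  "profile_count (Suc L) Lead_10 w m m1
     = (if w = 0 \<or> m = 0 \<or> m1 = 0 then 0 else profile_count L Lead_0 (w - 1) (m - 1) (m1 - 1))"
  unfolding profile_count_def card_words_Suc
  by (auto simp: profile_Cons_False profile_Cons_True profile_def split: lead.split intro!: arg_cong[where f = card])

lemma singleton_runs_pos: "lead_of b = Lead_10 \<Longrightarrow> 1 \<le> singleton_runs b"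
  by (cases b rule: lead_of.cases) auto

lemma profile_count_Suc_Lead_11:
  "profile_count (Suc L) Lead_11 w m m1
     = (if w = 0 then 0 else profile_count L Lead_10 (w - 1) m (Suc m1) + profile_count L Lead_11 (w - 1) m m1)"
proof (cases w)
  case (Suc w')
  have "profile_count (Suc L) Lead_11 w m m1 = card {b. length b = L \<and> profile (True # b) = (Lead_11, w, m, m1)}"
    unfolding profile_count_def card_words_Suc by (simp add: profile_Cons_False)
  also have "\<dots> = card {b. length b = L \<and> lead_of b = Lead_10 \<and> profile (True # b) = (Lead_11, w, m, m1)}
                 + card {b. length b = L \<and> lead_of b = Lead_11 \<and> profile (True # b) = (Lead_11, w, m, m1)}"
  proof -
    have empty: "{b. length b = L \<and> lead_of b = Lead_0 \<and> profile (True # b) = (Lead_11, w, m, m1)} = {}"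
      by (auto simp: profile_Cons_True)
    show ?thesis by (subst card_words_by_lead) (simp only: empty card.empty add_0)
  qed
  also have "\<dots> = profile_count L Lead_10 w' m (Suc m1) + profile_count L Lead_11 w' m m1"
  proof -
    have "{b. length b = L \<and> lead_of b = Lead_10 \<and> profile (True # b) = (Lead_11, w, m, m1)}
        = {b. length b = L \<and> profile b = (Lead_10, w', m, Suc m1)}"
      using singleton_runs_pos Suc by (fastforce simp: profile_Cons_True profile_def)
    moreover have "{b. length b = L \<and> lead_of b = Lead_11 \<and> profile (True # b) = (Lead_11, w, m, m1)}
        = {b. length b = L \<and> profile b = (Lead_11, w', m, m1)}"
      using Suc by (auto simp: profile_Cons_True profile_def)
    ultimately show ?thesis unfolding profile_count_def by simp
  qed
  finally show ?thesis using Suc by simp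
next
  case 0
  have "profile (True # b) \<noteq> (Lead_11, 0, m, m1)" for b
    by (simp add: profile_Cons_True split: lead.split)
  then show ?thesis
    using 0 unfolding profile_count_def card_words_Suc by (simp add: profile_Cons_False)
qed

text \<open>Once the positions of the \<open>m1\<close> singleton runs among the \<open>m\<close> runs are fixed, this
  counts the lengths of the other runs: \<open>m - m1\<close> numbers \<open>\<ge> 2\<close> summing to \<open>w - m1\<close>.
  It is the paper's \<open>binom (w - m - 1) (m - m1 - 1)\<close> with its conventions.\<close>
definition long_runs_count :: "nat \<Rightarrow> nat \<Rightarrow> nat \<Rightarrow> nat" where
  "long_runs_count w m m1 =
     (if m1 = m then (if w = m then 1 else 0)
      else if 2 * m - m1 \<le> w then (w - m - 1) choose (m - m1 - 1) else 0)"

lemma long_runs_count_Suc: "long_runs_count (Suc w) (Suc m) (Suc m1) = long_runs_count w m m1"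
proof -
  have "(2 * Suc m - Suc m1 \<le> Suc w) = (2 * m - m1 \<le> w)" by arith
  then show ?thesis unfolding long_runs_count_def by simp
qed

lemma long_runs_count_0: "1 \<le> m \<Longrightarrow> m1 \<le> m \<Longrightarrow> long_runs_count 0 m m1 = 0"
  unfolding long_runs_count_def by auto

lemma long_runs_count_Suc_weight:
  assumes "m1 < m"
  shows "long_runs_count (Suc w) m m1 = long_runs_count w m (Suc m1) + long_runs_count w m m1"
proof (cases "Suc m1 = m")
  case True
  then show ?thesis unfolding long_runs_count_def by auto
next
  case False
  then have lt: "Suc m1 < m" using assms by simp
  define k where "k = m - m1 - 2"
  have k: "m - m1 - 1 = Suc k" "m - Suc m1 - 1 = k" using lt unfolding k_def by auto
  consider "2 * m - m1 \<le> w" | "2 * m - m1 = Suc w" | "Suc w < 2 * m - m1" by linarith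
  then show ?thesis
  proof cases
    case 1
    then have "Suc w - m - 1 = Suc (w - m - 1)" "2 * m - Suc m1 \<le> w" "2 * m - m1 \<le> Suc w"
      using lt by arith+
    then show ?thesis using 1 lt k unfolding long_runs_count_def by simp
  next
    case 2
    then have "w - m - 1 = k" "Suc w - m - 1 = Suc k" "2 * m - Suc m1 \<le> w"
      using lt unfolding k_def by arith+
    then show ?thesis using 2 lt k unfolding long_runs_count_def by simp
  next
    case 3
    then show ?thesis using lt unfolding long_runs_count_def by auto
  qed
qed

fun profile_formula :: "lead \<Rightarrow> nat \<Rightarrow> nat \<Rightarrow> nat \<Rightarrow> nat \<Rightarrow> nat" where
  "profile_formula Lead_0 L w m m1 =
     (if w \<le> L then (m choose m1) * long_runs_count w m m1 * ((L - w) choose m) else 0)"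
| "profile_formula Lead_10 L w m m1 =
     (if w \<le> L \<and> 1 \<le> m \<and> 1 \<le> m1
      then ((m - 1) choose (m1 - 1)) * long_runs_count w m m1 * ((L - w) choose (m - 1)) else 0)"
| "profile_formula Lead_11 L w m m1 =
     (if w \<le> L \<and> 1 \<le> m
      then ((m - 1) choose m1) * long_runs_count w m m1 * ((L - w) choose (m - 1)) else 0)"

lemma profile_formula_0:
  "profile_formula s 0 w m m1 = (if s = Lead_0 \<and> w = 0 \<and> m = 0 \<and> m1 = 0 then 1 else 0)"
  by (cases s; cases m; cases m1) (auto simp: long_runs_count_def)

lemma profile_formula_Suc_Lead_0:
  "profile_formula Lead_0 (Suc L) w m m1
     = profile_formula Lead_0 L w m m1 + profile_formula Lead_10 L w m m1 + profile_formula Lead_11 L w m m1"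
proof (cases "w \<le> L")
  case True
  then have "Suc L - w = Suc (L - w)" by arith
  then show ?thesis using True by (cases m; cases m1) (simp_all add: algebra_simps)
next
  case False
  show ?thesis
  proof (cases "w = Suc L")
    case True
    then have "(m choose m1) * long_runs_count w m m1 * ((Suc L - w) choose m) = 0"
      by (cases m; cases m1) (auto simp: long_runs_count_def)
    then show ?thesis using False True by simp
  qed (use False in simp)
qed

lemma profile_formula_Suc_Lead_10:
  "profile_formula Lead_10 (Suc L) w m m1
     = (if w = 0 \<or> m = 0 \<or> m1 = 0 then 0 else profile_formula Lead_0 L (w - 1) (m - 1) (m1 - 1))"
proof (cases "w = 0 \<or> m = 0 \<or> m1 = 0")
  case True
  then show ?thesis using long_runs_count_0[of m m1] by (cases "m1 \<le> m") auto
next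
  case False
  then obtain w' m' m1' where "w = Suc w'" "m = Suc m'" "m1 = Suc m1'"
    by (metis not0_implies_Suc)
  then show ?thesis by (simp add: long_runs_count_Suc)
qed

lemma profile_formula_Suc_Lead_11:
  "profile_formula Lead_11 (Suc L) w m m1
     = (if w = 0 then 0 else profile_formula Lead_10 L (w - 1) m (Suc m1) + profile_formula Lead_11 L (w - 1) m m1)"
proof (cases w)
  case 0
  then show ?thesis using long_runs_count_0[of m m1] by (cases "m1 < m") auto
next
  case (Suc w')
  show ?thesis
  proof (cases "m1 < m \<and> 1 \<le> m \<and> w' \<le> L")
    case True
    then show ?thesis using Suc long_runs_count_Suc_weight[of m1 m w'] by (simp add: algebra_simps)
  next
    case False
    then consider "\<not> (1 \<le> m \<and> w' \<le> L)" | "m \<le> m1" "1 \<le> m" by linarith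
    then show ?thesis using Suc by cases (auto simp: binomial_eq_0)
  qed
qed

lemma profile_count_eq_formula: "profile_count L s w m m1 = profile_formula s L w m m1"
proof (induction L arbitrary: s w m m1)
  case 0
  show ?case by (simp add: profile_count_0 profile_formula_0)
next
  case (Suc L)
  show ?case
    by (cases s) (simp_all add: Suc.IH profile_count_Suc_Lead_0 profile_formula_Suc_Lead_0
        profile_count_Suc_Lead_10 profile_formula_Suc_Lead_10
        profile_count_Suc_Lead_11 profile_formula_Suc_Lead_11 del: profile_formula.simps)
qed

lemma ibinom_of_nat: "ibinom (int a) (int b) = int (a choose b)"
  unfolding ibinom_def by simp

lemma ibinom_long_runs_count:
  assumes "m1 \<le> m" "m \<le> w"
  shows "ibinom (int w - int m - 1) (int m - int m1 - 1) = int (long_runs_count w m m1)"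
proof (cases "m1 = m \<or> w = m")
  case True
  then show ?thesis using assms unfolding ibinom_def long_runs_count_def by auto
next
  case False
  then have "nat (int w - int m - 1) = w - m - 1" "nat (int m - int m1 - 1) = m - m1 - 1"
    using assms by auto
  moreover have "(w - m - 1) choose (m - m1 - 1) = 0" if "\<not> 2 * m - m1 \<le> w"
    using that assms False by (intro binomial_eq_0) arith
  ultimately show ?thesis using assms False unfolding ibinom_def long_runs_count_def by auto
qed

text \<open>Summing out the singleton runs is Vandermonde's identity.\<close>
lemma sum_long_runs_count:
  "int (\<Sum>m1 = 0..m. (m choose m1) * long_runs_count w m m1) = ibinom (int w - 1) (int m - 1)"
proof (cases m)
  case 0
  then show ?thesis by (simp add: long_runs_count_def ibinom_def)
next
  case (Suc m')
  consider "w < m" | "w = m" | "m < w" by linarith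
  then show ?thesis
  proof cases
    case 1
    then have "long_runs_count w m m1 = 0" if "m1 \<le> m" for m1
      using that unfolding long_runs_count_def by auto
    then show ?thesis using 1 Suc by (auto simp: ibinom_def nat_diff_distrib)
  next
    case 2
    then have "long_runs_count w m m1 = (if m1 = m then 1 else 0)" if "m1 \<le> m" for m1
      using that unfolding long_runs_count_def by auto
    then show ?thesis using 2 Suc by (simp add: ibinom_def nat_diff_distrib)
  next
    case 3
    have K: "long_runs_count w m k = (w - m - 1) choose (m' - k)" if "k \<le> m'" for k
      using that 3 Suc unfolding long_runs_count_def by (auto intro!: binomial_eq_0[symmetric])
    have "(\<Sum>m1 = 0..m. (m choose m1) * long_runs_count w m m1)
        = (\<Sum>k\<le>m'. (m choose k) * ((w - m - 1) choose (m' - k)))"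
    proof -
      have "long_runs_count w m m = 0" using 3 unfolding long_runs_count_def by simp
      then show ?thesis using Suc by (auto simp: atLeast0AtMost K[unfolded Suc] intro!: sum.cong)
    qed
    also have "\<dots> = (w - 1) choose m'"
      using vandermonde[where r = m' and m = m and n = "w - m - 1"] 3 by simp
    finally show ?thesis using 3 Suc by (simp add: ibinom_def nat_diff_distrib)
  qed
qed

lemma card_words_with_stats:
  "card {b. length b = L \<and> weight b = w \<and> runs b = m \<and> singleton_runs b = m1}
     = profile_formula Lead_0 (Suc L) w m m1"
  unfolding card_words_with_stats_eq_profile_count profile_count_eq_formula ..

lemma sum_words_by_weight_runs:
  "(\<Sum>b | length b = L. f b)
     = (\<Sum>w = 0..L. \<Sum>m = 0..min w (Suc L - w). \<Sum>b | length b = L \<and> weight b = w \<and> runs b = m. f b)"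
proof -
  have "(\<Sum>b | length b = L. f b) = (\<Sum>w = 0..L. \<Sum>b | length b = L \<and> weight b = w. f b)"
    using finite_words_length[of L]
    by (subst sum.group[symmetric, where g = weight and T = "{0..L}"]) (auto simp: count_le_length)
  also have "\<dots> = (\<Sum>w = 0..L. \<Sum>m = 0..min w (Suc L - w). \<Sum>b | length b = L \<and> weight b = w \<and> runs b = m. f b)"
  proof (rule sum.cong[OF refl])
    fix w
    show "(\<Sum>b | length b = L \<and> weight b = w. f b)
        = (\<Sum>m = 0..min w (Suc L - w). \<Sum>b | length b = L \<and> weight b = w \<and> runs b = m. f b)"
      using finite_words[of L "\<lambda>b. weight b = w"] runs_le_weight runs_le_Suc_length_minus_weight
      by (subst sum.group[symmetric, where g = runs and T = "{0..min w (Suc L - w)}"])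
         (auto simp: conj_commute conj_left_commute)
  qed
  finally show ?thesis .
qed

lemma sum_words_by_singleton_runs:
  "(\<Sum>b | length b = L \<and> weight b = w \<and> runs b = m. f b)
     = (\<Sum>m1 = 0..m. \<Sum>b | length b = L \<and> weight b = w \<and> runs b = m \<and> singleton_runs b = m1. f b)"
  using finite_words[of L "\<lambda>b. weight b = w \<and> runs b = m"] singleton_runs_le_runs
  by (subst sum.group[symmetric, where g = singleton_runs and T = "{0..m}"])
     (auto simp: conj_commute conj_left_commute)

lemma card_words_with_weight_runs:
  assumes "w \<le> L"
  shows "real (card {b. length b = L \<and> weight b = w \<and> runs b = m})
    = real_of_int (ibinom (int w - 1) (int m - 1)) * real_of_int (ibinom (int (Suc L - w)) (int m))"
proof -
  have "card {b. length b = L \<and> weight b = w \<and> runs b = m}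
      = (\<Sum>m1 = 0..m. card {b. length b = L \<and> weight b = w \<and> runs b = m \<and> singleton_runs b = m1})"
    using sum_words_by_singleton_runs[of "\<lambda>_. 1 :: nat"] by simp
  also have "\<dots> = (\<Sum>m1 = 0..m. (m choose m1) * long_runs_count w m m1) * (Suc L - w choose m)"
    using assms by (simp add: card_words_with_stats sum_distrib_right)
  finally have "int (card {b. length b = L \<and> weight b = w \<and> runs b = m})
      = ibinom (int w - 1) (int m - 1) * ibinom (int (Suc L - w)) (int m)"
    by (simp only: of_nat_mult sum_long_runs_count ibinom_of_nat)
  then have "real_of_int (int (card {b. length b = L \<and> weight b = w \<and> runs b = m}))
      = real_of_int (ibinom (int w - 1) (int m - 1) * ibinom (int (Suc L - w)) (int m))"
    by (rule arg_cong)
  then show ?thesis by simp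
qed

lemma card_words_with_weight_runs_singleton_runs:
  assumes "w \<le> L" "m \<le> w" "m1 \<le> m"
  shows "real (card {b. length b = L \<and> weight b = w \<and> runs b = m \<and> singleton_runs b = m1})
    = real_of_int (ibinom (int m) (int m1)) * real_of_int (ibinom (int w - int m - 1) (int m - int m1 - 1))
      * real_of_int (ibinom (int (Suc L - w)) (int m))"
proof -
  have "card {b. length b = L \<and> weight b = w \<and> runs b = m \<and> singleton_runs b = m1}
      = (m choose m1) * long_runs_count w m m1 * (Suc L - w choose m)"
    using assms by (simp add: card_words_with_stats)
  then show ?thesis
    unfolding ibinom_long_runs_count[OF assms(3,2)] ibinom_of_nat of_int_of_nat_eq by simp
qed

lemma M_grain_Suc_le:
  "real (M_grain (Suc L) t) \<le> 2 * (\<Sum>b | length b = L. 1 / real (\<Sum>k\<le>t. nc_count k b))"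
proof -
  have "real (M_grain (Suc L) t) \<le> (\<Sum>y | length y = Suc L. 1 / real (card (Phi_grain t y)))"
    by (rule M_grain_le_sum_inverse_card_Phi_grain)
  also have "\<dots> = (\<Sum>y | length y = Suc L. (\<lambda>b. 1 / real (\<Sum>k\<le>t. nc_count k b)) (diff_word y))"
    by (simp only: card_Phi_grain_eq_sum_nc_count)
  also have "\<dots> = 2 * (\<Sum>b | length b = L. 1 / real (\<Sum>k\<le>t. nc_count k b))"
    by (rule sum_words_diff_word)
  finally show ?thesis .
qed

lemma sum_inverse_nc_count_2:
  "(\<Sum>b | length b = L. 1 / real (\<Sum>k\<le>2. nc_count k b))
     = (\<Sum>w = 0..L. \<Sum>m = 0..min w (Suc L - w).
          real_of_int (ibinom (int w - 1) (int m - 1)) * real_of_int (ibinom (int (Suc L - w)) (int m))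
          / (1 + real m + real (w choose 2)))"
  unfolding sum_words_by_weight_runs[where L = L]
  by (intro sum.cong refl) (simp add: sum_nc_count_2 card_words_with_weight_runs)

lemma sum_inverse_nc_count_3:
  "(\<Sum>b | length b = L. 1 / real (\<Sum>k\<le>3. nc_count k b))
     = (\<Sum>w = 0..L. \<Sum>m = 0..min w (Suc L - w). \<Sum>m1 = 0..m.
          real_of_int (ibinom (int m) (int m1)) * real_of_int (ibinom (int w - int m - 1) (int m - int m1 - 1))
          * real_of_int (ibinom (int (Suc L - w)) (int m)) / real_of_int (phi3 m1 m w))"
proof -
  have "real (\<Sum>k\<le>3. nc_count k b) = real_of_int (phi3 (singleton_runs b) (runs b) (weight b))" for b
    by (metis sum_nc_count_3 of_int_of_nat_eq)
  then show ?thesis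
    unfolding sum_words_by_weight_runs[where L = L] sum_words_by_singleton_runs
    by (intro sum.cong refl) (simp add: card_words_with_weight_runs_singleton_runs)
qed

theorem corollary3p4:
  fixes n :: nat
  assumes "n \<ge> 1"
  shows "(real (M_grain n 2) \<le> 2 * (\<Sum>w = 0..n-1. \<Sum>m = 0..min w (n - w).
            real_of_int (ibinom (int w - 1) (int m - 1)) * real_of_int (ibinom (int (n - w)) (int m))
            / (1 + real m + real (w choose 2)))) \<and>
         (real (M_grain n 3) \<le> 2 * (\<Sum>w = 0..n-1. \<Sum>m = 0..min w (n - w). \<Sum>m1 = 0..m.
            real_of_int (ibinom (int m) (int m1)) * real_of_int (ibinom (int w - int m - 1) (int m - int m1 - 1))
            * real_of_int (ibinom (int (n - w)) (int m)) / real_of_int (phi3 m1 m w)))"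
proof -
  obtain L where n: "n = Suc L" using assms by (cases n) auto
  show ?thesis
    using M_grain_Suc_le[of L 2] M_grain_Suc_le[of L 3]
    unfolding n sum_inverse_nc_count_2 sum_inverse_nc_count_3 by simp
qed

end
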